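(* Let $H$ be a fixed graph, $p\in[0,1)$, and let $G$ be an online graph together with an arbitrary sequence of advice bits $u_1(G),u_2(G),\dots\in\{0,1\}$, such that $G$ is not $H$-free. Run $\mathrm{ALG}_p$ on $G$ with this advice (with arbitrary choices among simultaneously appearing copies of $H$), and let $\tilde d,\tilde e$ be the final values of the counters $d,e$. If $\tilde d+\tilde e>0$, then $$\frac{\tilde d}{\tilde e+\tilde d}\le (1-p)+\frac{1}{\tilde e+\tilde d}.$$
   Context: All graphs are finite, simple and undirected. An induced copy of $H$ in $G$ is an induced subgraph of $G$ isomorphic to $H$; $G$ is $H$-free if it has no induced copy of $H$. An online graph $G$ has its vertices $v_1,\dots,v_n$ revealed one at a time (each together with its edges to previously revealed vertices); with predictions, when $v_t$ is revealed the algorithm also receives one bit $u_t(G)\in\{0,1\}$. Algorithm $\mathrm{ALG}_p$ (parameter $p\in[0,1)$, $k=|V(H)|$): it maintains counters $d$ and $e$, initially $0$. Deleted vertices are removed permanently. After each vertex is revealed, as long as the current remaining graph contains an induced copy of $H$, it picks one such copy (arbitrarily) and applies the first applicable case: (Case 1) If the copy contains no vertex with advice bit $1$ (or such a copy has appeared at some earlier point), then from now on the algorithm deletes all vertices of every copy of $H$ that appears, without changing $d$ or $e$. (Case 2) Else, if $d=0$ or $e/(e+d)>p$: delete all $k$ vertices of the copy and increase $d$ by $1$. (Case 3) Else: delete one vertex of the copy with advice bit $1$ (the earliest-revealed such vertex) and increase $e$ by $1$. This is repeated until the remaining graph is $H$-free, before the next vertex is revealed. *)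

theory Defs
  imports Main "HOL.Real"
begin

text \<open>The online graph G has vertices 0,1,...,n-1 (vertex t is revealed at time t)
 and edge relation E. Advice bit of vertex t is u t (True = 1).\<close>

definition simple_graph :: "'a set \<Rightarrow> ('a \<Rightarrow> 'a \<Rightarrow> bool) \<Rightarrow> bool" where
  "simple_graph V Ed \<longleftrightarrow> finite V \<and>
     (\<forall>a\<in>V. \<forall>b\<in>V. Ed a b \<longleftrightarrow> Ed b a) \<and> (\<forall>a\<in>V. \<not> Ed a a)"

definition induced_copy ::
  "'h set \<Rightarrow> ('h \<Rightarrow> 'h \<Rightarrow> bool) \<Rightarrow> ('v \<Rightarrow> 'v \<Rightarrow> bool) \<Rightarrow> 'v set \<Rightarrow> 'v set \<Rightarrow> bool" where
  "induced_copy VH EH E S C \<longleftrightarrow> C \<subseteq> S \<and>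
     (\<exists>f. inj_on f VH \<and> f ` VH = C \<and> (\<forall>a\<in>VH. \<forall>b\<in>VH. EH a b \<longleftrightarrow> E (f a) (f b)))"

definition H_free ::
  "'h set \<Rightarrow> ('h \<Rightarrow> 'h \<Rightarrow> bool) \<Rightarrow> ('v \<Rightarrow> 'v \<Rightarrow> bool) \<Rightarrow> 'v set \<Rightarrow> bool" where
  "H_free VH EH E S \<longleftrightarrow> \<not> (\<exists>C. induced_copy VH EH E S C)"

text \<open>State of ALG_p: (t, R, d, e, c1) where t = number of revealed vertices,
 R = set of revealed, not yet deleted vertices, d, e the counters, and c1 says
 whether Case 1 has been entered (a copy without advice-1 vertex has appeared).\<close>
type_synonym alg_state = "nat \<times> nat set \<times> nat \<times> nat \<times> bool"

inductive alg_step ::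
  "real \<Rightarrow> 'h set \<Rightarrow> ('h \<Rightarrow> 'h \<Rightarrow> bool) \<Rightarrow> nat \<Rightarrow> (nat \<Rightarrow> nat \<Rightarrow> bool) \<Rightarrow> (nat \<Rightarrow> bool)
   \<Rightarrow> alg_state \<Rightarrow> alg_state \<Rightarrow> bool"
  for p VH EH n E u where
  reveal: "\<lbrakk> H_free VH EH E R; t < n \<rbrakk> \<Longrightarrow>
     alg_step p VH EH n E u (t, R, d, e, c1) (Suc t, insert t R, d, e, c1)"
| case1: "\<lbrakk> induced_copy VH EH E R C; c1 \<or> (\<forall>v\<in>C. \<not> u v) \<rbrakk> \<Longrightarrow>
     alg_step p VH EH n E u (t, R, d, e, c1) (t, R - C, d, e, True)"
| case2: "\<lbrakk> induced_copy VH EH E R C; \<not> c1; \<exists>v\<in>C. u v;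
            d = 0 \<or> real e / (real e + real d) > p \<rbrakk> \<Longrightarrow>
     alg_step p VH EH n E u (t, R, d, e, c1) (t, R - C, Suc d, e, c1)"
| case3: "\<lbrakk> induced_copy VH EH E R C; \<not> c1; \<exists>v\<in>C. u v;
            \<not> (d = 0 \<or> real e / (real e + real d) > p) \<rbrakk> \<Longrightarrow>
     alg_step p VH EH n E u (t, R, d, e, c1)
       (t, R - {LEAST v. v \<in> C \<and> u v}, d, Suc e, c1)"

definition alg_final_run ::
  "real \<Rightarrow> 'h set \<Rightarrow> ('h \<Rightarrow> 'h \<Rightarrow> bool) \<Rightarrow> nat \<Rightarrow> (nat \<Rightarrow> nat \<Rightarrow> bool) \<Rightarrow> (nat \<Rightarrow> bool)
   \<Rightarrow> nat set \<Rightarrow> nat \<Rightarrow> nat \<Rightarrow> bool \<Rightarrow> bool" where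
  "alg_final_run p VH EH n E u R d e c1 \<longleftrightarrow>
     (alg_step p VH EH n E u)\<^sup>*\<^sup>* (0, {}, 0, 0, False) (n, R, d, e, c1) \<and> H_free VH EH E R"

end

theory Submission
  imports Defs
begin

text \<open>The counters satisfy \<open>d \<le> (1 - p)(e + d) + 1\<close> throughout the run. Case 2 increments
  \<open>d\<close> only when \<open>d = 0\<close> or \<open>e > p (e + d)\<close>, i.e. \<open>d < (1 - p)(e + d)\<close>, so afterwards \<open>d\<close> exceeds
  \<open>(1 - p)(e + d)\<close> by at most one; Case 3 only increases the right-hand side, and the other
  steps leave the counters alone. Dividing by \<open>e + d\<close> gives the theorem.\<close>

definition counters_balanced :: "real \<Rightarrow> alg_state \<Rightarrow> bool" where
  "counters_balanced p s \<longleftrightarrow>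
     (case s of (t, R, d, e, c1) \<Rightarrow> real d \<le> (1 - p) * (real e + real d) + 1)"

lemma alg_step_counters_balanced:
  assumes "alg_step p VH EH n E u s s'" "p \<le> 1" "counters_balanced p s"
  shows "counters_balanced p s'"
  using assms(1)
proof cases
  case (case2 R C c1 d e t)
  show ?thesis
  proof (cases "d = 0")
    case True
    then show ?thesis using case2 \<open>p \<le> 1\<close> by (simp add: counters_balanced_def)
  next
    case False
    then have "real e / (real e + real d) > p" using case2 by simp
    then have "real d < (1 - p) * (real e + real d)"
      using False by (simp add: field_simps)
    then show ?thesis using case2 \<open>p \<le> 1\<close> by (simp add: counters_balanced_def algebra_simps)
  qed
next
  case (case3 R C c1 d e t)
  then show ?thesis using assms(2,3) by (simp add: counters_balanced_def algebra_simps)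
qed (use assms(3) in \<open>auto simp: counters_balanced_def\<close>)

lemma alg_steps_counters_balanced:
  assumes "(alg_step p VH EH n E u)\<^sup>*\<^sup>* s s'" "p \<le> 1" "counters_balanced p s"
  shows "counters_balanced p s'"
  using assms(1,3)
  by (induction rule: rtranclp_induct) (use alg_step_counters_balanced assms(2) in blast)+

lemma balanced_ratio_bound:
  fixes p :: real and d e :: nat
  assumes "real d \<le> (1 - p) * (real e + real d) + 1" "d + e > 0"
  shows "real d / (real e + real d) \<le> (1 - p) + 1 / (real e + real d)"
proof -
  have pos: "real e + real d > 0" using assms(2) by linarith
  have "real d / (real e + real d) \<le> ((1 - p) * (real e + real d) + 1) / (real e + real d)"
    using assms(1) pos by (simp add: divide_right_mono)
  also have "\<dots> = (1 - p) + 1 / (real e + real d)" using pos by (simp add: field_simps)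
  finally show ?thesis .
qed

theorem mainTheorem2:
  fixes VH :: "'h set" and EH :: "'h \<Rightarrow> 'h \<Rightarrow> bool"
    and n :: nat and E :: "nat \<Rightarrow> nat \<Rightarrow> bool" and u :: "nat \<Rightarrow> bool"
    and p :: real and R :: "nat set" and d e :: nat and c1 :: bool
  assumes "simple_graph VH EH"
    and "simple_graph {0..<n} E"
    and "0 \<le> p" and "p < 1"
    and "\<not> H_free VH EH E {0..<n}"
    and "alg_final_run p VH EH n E u R d e c1"
    and "d + e > 0"
  shows "real d / (real e + real d) \<le> (1 - p) + 1 / (real e + real d)"
proof -
  have run: "(alg_step p VH EH n E u)\<^sup>*\<^sup>* (0, {}, 0, 0, False) (n, R, d, e, c1)"
    using assms(6) unfolding alg_final_run_def by simp
  have "counters_balanced p (0, {}, 0, 0, False)"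
    using assms(4) by (simp add: counters_balanced_def)
  with run have "counters_balanced p (n, R, d, e, c1)"
    using alg_steps_counters_balanced assms(4) by force
  then show ?thesis
    using balanced_ratio_bound assms(7) by (simp add: counters_balanced_def)
qed

end
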